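(* Let $F=\sum_{g\ge 0}\lambda^{2g-2}F_g(p_1,p_2,\dots;s,u,v)$ be the dessin free energy (defined in the context), and define the genus zero one-point function $$G_{0,1}(x)=\sum_{m\ge 1} m\,\frac{\partial F_0}{\partial p_m}\Big|_{p_k=0,\,k\ge1}\, x^{-m-1}.$$ Then $G_{0,1}$ satisfies $G_{0,1}(x)=\frac{suv}{x^2}+\frac{s(u+v)}{x}G_{0,1}(x)+sG_{0,1}(x)^2$, and $$G_{0,1}(x)=\frac{1}{2s}\Big(1-\frac{s(u+v)}{x}-\sqrt{1-\frac{2s(u+v)}{x}+\frac{s^2(u-v)^2}{x^2}}\Big)=\sum_{n\ge1}\frac{s^n}{x^{n+1}}\sum_{k=1}^n\frac1n\binom{n}{k}\binom{n}{k-1}u^{n+1-k}v^k,$$ where the square root is the formal power series in $x^{-1}$ with constant term $1$. Equivalently, the coefficient of $x^{-n-1}$ is $s^n u^{n+1}N_n(v/u)$, where $N_n(q)=\sum_{k=1}^n N_{n,k}q^k$ is the $n$-th Narayana polynomial, $N_{n,k}=\frac1n\binom nk\binom n{k-1}$.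
   Context: Let $s,u,v$ be parameters and $\lambda$ a genus-tracking parameter. For $n\ge0$ define the dessin Virasoro operators $$L_n=-\frac{n+1}{s}\frac{\partial}{\partial p_{n+1}}+(u+v)n\frac{\partial}{\partial p_n}+\sum_{j\ge1}p_j(n+j)\frac{\partial}{\partial p_{n+j}}+\lambda^2\sum_{i+j=n,\ i,j\ge1}ij\frac{\partial^2}{\partial p_i\partial p_j}+\delta_{n,0}\,uv\,\lambda^{-2}.$$ The dessin free energy $F=\sum_{g\ge0}\lambda^{2g-2}F_g$ (the logarithm of the Kazarian–Zograf generating series of Grothendieck's dessins d'enfants, with $F_g$ formal power series in $p_1,p_2,\dots$ vanishing at $p=0$) is characterized by $L_n e^{F}=0$ for all $n\ge0$. In genus zero this means: for all $n\ge0$, $(u+v)n\,\partial_{p_n}F_0+\sum_{j\ge1}(p_j-\delta_{j,1}/s)(n+j)\partial_{p_{n+j}}F_0+\sum_{i+j=n}ij\,\partial_{p_i}F_0\,\partial_{p_j}F_0+\delta_{n,0}uv=0$. *)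

theory Defs
  imports "HOL-Library.Multiset" "HOL-Computational_Algebra.Formal_Power_Series"
begin

(* A formal power series in the variables p_1, p_2, ... is given by its coefficient
   function on monomials.  The monomial  prod_i p_i^(count M i)  is encoded by the
   multiset M of (positive) variable indices. *)
type_synonym 'a pseries = "nat multiset \<Rightarrow> 'a"

definition pos_monomial :: "nat multiset \<Rightarrow> bool" where
  "pos_monomial M \<longleftrightarrow> (\<forall>i\<in>#M. 0 < i)"

definition pdiff :: "'a::semiring_1 pseries \<Rightarrow> nat \<Rightarrow> 'a pseries" where
  "pdiff F i = (\<lambda>M. of_nat (count M i + 1) * F (add_mset i M))"

definition pmul_var :: "nat \<Rightarrow> 'a::zero pseries \<Rightarrow> 'a pseries" where
  "pmul_var j G = (\<lambda>M. if j \<in># M then G (M - {#j#}) else 0)"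

definition ps_mult :: "'a::comm_semiring_1 pseries \<Rightarrow> 'a pseries \<Rightarrow> 'a pseries" where
  "ps_mult A B = (\<lambda>M. \<Sum>N\<in>{N. N \<subseteq># M}. A N * B (M - N))"

definition ps_const :: "'a::zero \<Rightarrow> 'a pseries" where
  "ps_const c = (\<lambda>M. if M = {#} then c else 0)"

(* The genus zero Virasoro equation number n, as a coefficient function:
   (u+v) n dF/dp_n + sum_{j>=1} (p_j - delta_{j,1}/s)(n+j) dF/dp_{n+j}
   + sum_{i+j=n, i,j>=1} i j dF/dp_i dF/dp_j + delta_{n,0} u v *)
definition genus0_eq :: "'a::field \<Rightarrow> 'a \<Rightarrow> 'a \<Rightarrow> 'a pseries \<Rightarrow> nat \<Rightarrow> 'a pseries" where
  "genus0_eq s u v F n = (\<lambda>M.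
      (u + v) * of_nat n * pdiff F n M
    + (\<Sum>j\<in>set_mset M. of_nat (n + j) * pmul_var j (pdiff F (n + j)) M)
    - of_nat (n + 1) / s * pdiff F (n + 1) M
    + (\<Sum>i\<in>{1..<n}. of_nat (i * (n - i)) * ps_mult (pdiff F i) (pdiff F (n - i)) M)
    + (if n = 0 then ps_const (u * v) M else 0))"

definition dessin_genus0 :: "'a::field \<Rightarrow> 'a \<Rightarrow> 'a \<Rightarrow> 'a pseries \<Rightarrow> bool" where
  "dessin_genus0 s u v F \<longleftrightarrow>
     F {#} = 0 \<and> (\<forall>n M. pos_monomial M \<longrightarrow> genus0_eq s u v F n M = 0)"

(* genus zero one-point function, as a formal power series in y = x^{-1}:
   G_{0,1} = sum_{m>=1} m dF_0/dp_m|_{p=0} y^{m+1} *)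
definition G01 :: "'a::semiring_1 pseries \<Rightarrow> 'a fps" where
  "G01 F = Abs_fps (\<lambda>k. if k < 2 then 0 else of_nat (k - 1) * pdiff F (k - 1) {#})"

(* Narayana numbers N_{n,k} = (1/n) C(n,k) C(n,k-1) (an integer) and polynomials *)
definition narayana :: "nat \<Rightarrow> nat \<Rightarrow> nat" where
  "narayana n k = ((n choose k) * (n choose (k - 1))) div n"

definition narayana_poly :: "nat \<Rightarrow> 'a::semiring_1 \<Rightarrow> 'a" where
  "narayana_poly n q = (\<Sum>k=1..n. of_nat (narayana n k) * q ^ k)"

end

(* Write y = 1/x.  At p = 0 the genus zero Virasoro constraints reduce to a convolution
   recursion for the coefficients of G = G01, i.e. to the quadratic equation for G.  Completing
   the square, B = 1 - s(u+v)y - 2sG is the square root of A = 1 - 2s(u+v)y + s^2(u-v)^2 y^2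
   with constant term 1.  Differentiating B^2 = A gives 2 B' A = A' B, a three-term linear
   recurrence that determines G from its first three coefficients.  The homogeneous Narayana
   polynomials P_n = u^(n+1) N_n(v/u) satisfy the same recurrence
     (n+1) P_n = (2n-1)(u+v) P_(n-1) - (n-2)(u-v)^2 P_(n-2),
   which holds coefficientwise because neighbouring Narayana numbers differ by rational factors. *)

theory Submission
  imports Defs
begin

unbundle fps_syntax

section \<open>The quadratic equation for the one-point function\<close>

lemma dessin_genus0_one_point_rec:
  fixes s u v :: "'a::field_char_0"
  assumes "s \<noteq> 0" and "dessin_genus0 s u v F"
  shows "of_nat (Suc n) * F {#Suc n#} = s * ((u + v) * (of_nat n * F {#n#})
          + (\<Sum>i\<in>{1..<n}. (of_nat i * F {#i#}) * (of_nat (n - i) * F {#n - i#}))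
          + (if n = 0 then u * v else 0))"
proof -
  have "genus0_eq s u v F n {#} = 0"
    using assms(2) by (simp add: dessin_genus0_def pos_monomial_def)
  moreover have empty: "{N. N \<subseteq># {#}} = {{#}}" "ps_const (u * v) {#} = u * v"
    by (auto simp: ps_const_def)
  ultimately have e: "(u + v) * of_nat n * F {#n#} - of_nat (n + 1) / s * F {#n + 1#}
      + (\<Sum>i\<in>{1..<n}. of_nat (i * (n - i)) * (F {#i#} * F {#n - i#}))
      + (if n = 0 then u * v else 0) = 0"
    unfolding genus0_eq_def pdiff_def ps_mult_def empty
    by (simp del: of_nat_diff of_nat_mult of_nat_add add: add_ac)
  have "(\<Sum>i\<in>{1..<n}. of_nat (i * (n - i)) * (F {#i#} * F {#n - i#}))
      = (\<Sum>i\<in>{1..<n}. (of_nat i * F {#i#}) * (of_nat (n - i) * F {#n - i#}))"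
    by (rule sum.cong) (simp_all add: algebra_simps)
  with e assms(1) show ?thesis
    by (simp add: field_simps)
qed

lemma fps_of_convolution_rec:
  fixes g :: "nat \<Rightarrow> 'a::comm_ring_1"
  assumes g0: "g 0 = 0"
    and rec: "\<And>n. g (Suc n) = s * ((u + v) * g n + (\<Sum>i\<in>{1..<n}. g i * g (n - i))
                                     + (if n = 0 then u * v else 0))"
  shows "Abs_fps g = fps_const s * fps_X
           * (fps_const (u * v) + fps_const (u + v) * Abs_fps g + Abs_fps g ^ 2)"
proof (rule fps_ext)
  fix n
  have conv: "(Abs_fps g ^ 2) $ m = (\<Sum>i\<in>{1..<m}. g i * g (m - i))" for m
  proof -
    have "(Abs_fps g ^ 2) $ m = (\<Sum>i=0..m. g i * g (m - i))"
      by (simp add: power2_eq_square fps_mult_nth)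
    also have "\<dots> = (\<Sum>i\<in>{1..<m}. g i * g (m - i))"
      by (rule sum.mono_neutral_right) (auto simp: g0 Suc_le_eq)
    finally show ?thesis .
  qed
  show "Abs_fps g $ n = (fps_const s * fps_X
           * (fps_const (u * v) + fps_const (u + v) * Abs_fps g + Abs_fps g ^ 2)) $ n"
    by (cases n) (simp_all add: g0 rec conv mult.assoc algebra_simps)
qed

lemma G01_nth_0 [simp]: "G01 F $ 0 = 0"
  by (simp add: G01_def)

lemma G01_quadratic:
  fixes s u v :: "'a::field_char_0"
  assumes "s \<noteq> 0" and "dessin_genus0 s u v F"
  shows "G01 F = fps_const (s * u * v) * fps_X ^ 2 + fps_const (s * (u + v)) * fps_X * G01 F
                 + fps_const s * G01 F ^ 2"
proof -
  define f where "f = Abs_fps (\<lambda>n. of_nat n * F {#n#})"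
  have G: "G01 F = fps_X * f"
    by (rule fps_ext) (simp add: G01_def pdiff_def f_def)
  have f: "f = fps_const s * fps_X * (fps_const (u * v) + fps_const (u + v) * f + f ^ 2)"
    unfolding f_def
    by (rule fps_of_convolution_rec)
       (simp_all only: dessin_genus0_one_point_rec[OF assms] of_nat_0 mult_zero_left)
  have "G01 F = fps_X * (fps_const s * fps_X * (fps_const (u * v) + fps_const (u + v) * f + f ^ 2))"
    unfolding G by (subst f) (rule refl)
  also have "\<dots> = fps_const (s * u * v) * fps_X ^ 2 + fps_const (s * (u + v)) * fps_X * (fps_X * f)
                 + fps_const s * (fps_X * f) ^ 2"
    by (simp add: algebra_simps power2_eq_square)
  finally show ?thesis
    unfolding G .
qed

section \<open>Square roots of quadratic power series\<close>

lemma quadratic_fps_radical: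
  fixes s u v :: "'a::field_char_0" and G :: "'a fps"
  assumes s0: "s \<noteq> 0"
    and Q: "G = fps_const (s * u * v) * fps_X ^ 2 + fps_const (s * (u + v)) * fps_X * G
               + fps_const s * G ^ 2"
    and G0: "G $ 0 = 0"
  defines "A \<equiv> 1 - fps_const (2 * s * (u + v)) * fps_X + fps_const (s ^ 2 * (u - v) ^ 2) * fps_X ^ 2"
  shows "(1 - fps_const (s * (u + v)) * fps_X - fps_const (2 * s) * G) ^ 2 = A"
    and "G = fps_const (1 / (2 * s)) * (1 - fps_const (s * (u + v)) * fps_X - fps_radical (\<lambda>_ _. 1) 2 A)"
proof -
  define B where "B = 1 - fps_const (s * (u + v)) * fps_X - fps_const (2 * s) * G"
  define S U V where "S = fps_const s" and "U = fps_const u" and "V = fps_const v"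
  have c: "fps_const (s * u * v) = S * U * V" "fps_const (s * (u + v)) = S * (U + V)"
     "fps_const (2 * s) = 2 * S" "fps_const (2 * s * (u + v)) = 2 * S * (U + V)"
     "fps_const (s ^ 2 * (u - v) ^ 2) = S ^ 2 * (U - V) ^ 2"
    by (simp_all add: S_def U_def V_def fps_numeral_fps_const)
  have "B ^ 2 - A = 4 * S * (S * U * V * fps_X ^ 2 + S * (U + V) * fps_X * G + S * G ^ 2 - G)"
    unfolding B_def A_def c by algebra
  also have "\<dots> = 0"
    using Q unfolding c S_def by simp
  finally show B2: "(1 - fps_const (s * (u + v)) * fps_X - fps_const (2 * s) * G) ^ 2 = A"
    by (simp add: B_def)
  have "B ^ Suc 1 = A \<longleftrightarrow> B = fps_radical (\<lambda>_ _. 1) (Suc 1) A"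
    by (rule radical_unique) (simp_all add: A_def B_def G0)
  with B2 have "B = fps_radical (\<lambda>_ _. 1) 2 A"
    by (simp add: B_def numeral_2_eq_2)
  moreover have "G = fps_const (1 / (2 * s)) * (1 - fps_const (s * (u + v)) * fps_X - B)"
    using s0 by (simp add: B_def algebra_simps flip: mult.assoc)
  ultimately show "G = fps_const (1 / (2 * s))
      * (1 - fps_const (s * (u + v)) * fps_X - fps_radical (\<lambda>_ _. 1) 2 A)"
    by simp
qed

lemma fps_square_quadratic_coeff_rec:
  fixes B :: "'a::field_char_0 fps"
  assumes "B ^ 2 = 1 - fps_const c1 * fps_X + fps_const c2 * fps_X ^ 2"
  shows "2 * of_nat (m + 3) * B $ (m + 3)
       = c1 * of_nat (2 * m + 3) * B $ (m + 2) - 2 * c2 * of_nat m * B $ (m + 1)"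
proof -
  define A where "A = 1 - fps_const c1 * fps_X + fps_const c2 * fps_X ^ 2"
  have deriv: "fps_const 2 * fps_deriv B * B = fps_deriv A"
    using fps_deriv_power[of B 2] assms by (simp add: A_def)
  have "fps_const 2 * fps_deriv B * A = fps_const 2 * fps_deriv B * B * B"
    using assms by (simp add: A_def power2_eq_square mult.assoc)
  also have "\<dots> = fps_deriv A * B"
    by (simp only: deriv)
  finally have ode: "fps_const 2 * (fps_deriv B * A) = fps_deriv A * B"
    by (simp only: mult.assoc)
  have "fps_deriv A = fps_const (- c1) + fps_const (2 * c2) * fps_X"
    by (rule fps_ext) (simp add: A_def)
  then have "(fps_deriv A * B) $ (m + 2) = - c1 * B $ (m + 2) + 2 * c2 * B $ (m + 1)"
    by (simp add: distrib_right mult.assoc)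
  moreover have "(fps_deriv B * A) $ (m + 2) = of_nat (m + 3) * B $ (m + 3)
      - c1 * (of_nat (m + 2) * B $ (m + 2)) + c2 * (of_nat (m + 1) * B $ (m + 1))"
    by (simp add: A_def algebra_simps fps_X_power_mult_right_nth numeral_3_eq_3 numeral_2_eq_2)
  moreover have "2 * (fps_deriv B * A) $ (m + 2) = (fps_deriv A * B) $ (m + 2)"
    using arg_cong[OF ode, of "\<lambda>f. f $ (m + 2)"] by (simp only: fps_mult_left_const_nth)
  ultimately have "2 * (of_nat (m + 3) * B $ (m + 3) - c1 * (of_nat (m + 2) * B $ (m + 2))
      + c2 * (of_nat (m + 1) * B $ (m + 1))) = - c1 * B $ (m + 2) + 2 * c2 * B $ (m + 1)"
    by (simp only:)
  then show ?thesis
    by (simp add: algebra_simps)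
qed

lemma quadratic_fps_coeff_rec:
  fixes s u v :: "'a::field_char_0" and G :: "'a fps"
  assumes "s \<noteq> 0"
    and "G = fps_const (s * u * v) * fps_X ^ 2 + fps_const (s * (u + v)) * fps_X * G
               + fps_const s * G ^ 2"
    and "G $ 0 = 0"
  shows "of_nat (m + 3) * G $ (m + 3) = of_nat (2 * m + 3) * (s * (u + v)) * G $ (m + 2)
            - of_nat m * (s ^ 2 * (u - v) ^ 2) * G $ (m + 1)"
proof -
  define B where "B = 1 - fps_const (s * (u + v)) * fps_X - fps_const (2 * s) * G"
  have rec: "2 * of_nat (m + 3) * B $ (m + 3) = (2 * s * (u + v)) * of_nat (2 * m + 3) * B $ (m + 2)
      - 2 * (s ^ 2 * (u - v) ^ 2) * of_nat m * B $ (m + 1)"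
    using quadratic_fps_radical(1)[OF assms]
    by (intro fps_square_quadratic_coeff_rec) (simp add: B_def)
  have "B $ k = - 2 * s * G $ k" if "k \<ge> 2" for k
    using that by (simp add: B_def mult.assoc)
  moreover have "of_nat m * B $ (m + 1) = of_nat m * (- 2 * s * G $ (m + 1))"
    by (cases m) (simp_all add: B_def mult.assoc)
  ultimately have "2 * of_nat (m + 3) * (- 2 * s * G $ (m + 3))
      = (2 * s * (u + v)) * of_nat (2 * m + 3) * (- 2 * s * G $ (m + 2))
        - 2 * (s ^ 2 * (u - v) ^ 2) * (of_nat m * (- 2 * s * G $ (m + 1)))"
    using rec by (simp add: mult.assoc)
  then have "(- 4 * s) * (of_nat (m + 3) * G $ (m + 3)) = (- 4 * s) * (of_nat (2 * m + 3) * (s * (u + v)) * G $ (m + 2)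
            - of_nat m * (s ^ 2 * (u - v) ^ 2) * G $ (m + 1))"
    by (simp add: algebra_simps)
  then show ?thesis
    using assms(1) by simp
qed

lemma fps_eq_by_coeff_rec:
  fixes f g :: "'a::field_char_0 fps"
  assumes "\<And>k. k < 3 \<Longrightarrow> f $ k = g $ k"
    and "\<And>m. of_nat (m + 3) * f $ (m + 3) = \<alpha> m * f $ (m + 2) - \<beta> m * f $ (m + 1)"
    and "\<And>m. of_nat (m + 3) * g $ (m + 3) = \<alpha> m * g $ (m + 2) - \<beta> m * g $ (m + 1)"
  shows "f = g"
proof (rule fps_ext)
  fix k show "f $ k = g $ k"
  proof (induction k rule: less_induct)
    case (less k)
    show ?case
    proof (cases "k < 3")
      case False
      then obtain m where k: "k = m + 3"
        by (metis add.commute le_Suc_ex not_less)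
      have "of_nat (m + 3) * f $ (m + 3) = of_nat (m + 3) * g $ (m + 3)"
        using assms(2,3)[of m] less k by simp
      moreover have "(of_nat (m + 3) :: 'a) \<noteq> 0"
        by (simp only: of_nat_eq_0_iff)
      ultimately show ?thesis
        using k by simp
    qed (rule assms(1))
  qed
qed

section \<open>Homogeneous Narayana polynomials\<close>

(* The coefficient of u^a v^b in u^(n+1) N_n(v/u) for n = a + b - 1, i.e. N_(n,b); it vanishes
   for a = 0 or b = 0. *)
definition narayana_coeff :: "nat \<Rightarrow> nat \<Rightarrow> 'a::field_char_0" where
  "narayana_coeff a b = of_nat ((a + b - 1 choose a) * (a + b - 1 choose b)) / of_nat (a + b - 1)"

lemma narayana_coeff_commute: "narayana_coeff a b = narayana_coeff b a"
  by (simp add: narayana_coeff_def add.commute mult.commute)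

lemma narayana_coeff_0_left [simp]: "narayana_coeff 0 b = 0"
  by (cases b) (simp_all add: narayana_coeff_def)

lemma narayana_coeff_0_right [simp]: "narayana_coeff a 0 = 0"
  by (subst narayana_coeff_commute) simp

lemma narayana_coeff_lower_left:
  "of_nat (a * (a - 1)) * narayana_coeff a b
     = of_nat ((a + b - 1) * (a + b - 2)) * (narayana_coeff (a - 1) b :: 'a::field_char_0)"
proof (cases "a = 0 \<or> b = 0")
  case False
  then obtain i j where a: "a = Suc i" and b: "b = Suc j" by (metis not0_implies_Suc)
  define n where "n = i + j"
  define P where "P = (Suc n choose Suc i) * (Suc n choose Suc j)"
  define Q where "Q = (n choose i) * (n choose Suc j)"
  have "Suc i * (Suc n choose Suc i) = Suc n * (n choose i)"
    by (rule Suc_times_binomial)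
  moreover have "i * (Suc n choose Suc j) = Suc n * (n choose Suc j)"
    using binomial_absorb_comp[of "Suc n" "Suc j"] by (simp add: n_def)
  ultimately have "Suc i * i * P = Suc n * (Suc n * Q)"
    unfolding P_def Q_def by (metis mult.assoc mult.left_commute)
  then have "of_nat (Suc i * i) * (of_nat P / of_nat (Suc n)) = (of_nat (Suc n) * of_nat Q :: 'a)"
    by (metis (no_types, lifting) nonzero_mult_div_cancel_left of_nat_eq_0_iff of_nat_mult
        times_divide_eq_right nat.distinct(1))
  also have "\<dots> = of_nat (Suc n * n) * (of_nat Q / of_nat n)"
    by (cases "n = 0") (simp_all add: Q_def field_simps)
  finally show ?thesis
    using a b by (simp add: narayana_coeff_def P_def Q_def n_def)
qed auto

lemma narayana_coeff_lower_right:
  "of_nat (b * (b - 1)) * narayana_coeff a b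
     = of_nat ((a + b - 1) * (a + b - 2)) * (narayana_coeff a (b - 1) :: 'a::field_char_0)"
  using narayana_coeff_lower_left[of b a] by (simp add: narayana_coeff_commute add.commute)

lemma of_nat_mult_pred: "of_nat (m * (m - 1)) = (of_nat m * (of_nat m - 1) :: 'a::ring_1)"
  by (cases m) (simp_all add: algebra_simps)

lemma narayana_coeff_rec:
  assumes "3 \<le> a + b"
  shows "of_nat (a + b) * narayana_coeff a b
    = of_nat (2 * (a + b) - 3) * (narayana_coeff (a - 1) b + narayana_coeff a (b - 1))
      - of_nat (a + b - 3) * (narayana_coeff (a - 2) b - 2 * narayana_coeff (a - 1) (b - 1)
                              + (narayana_coeff a (b - 2) :: 'a::field_char_0))"
proof (cases "a = 0 \<or> b = 0")
  case False
  define A B D :: 'a where "A = of_nat a" and "B = of_nat b" and "D = of_nat (a + b)"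
  define X Y1 Y2 Z1 Z2 Z3 :: 'a where
    "X = narayana_coeff a b" and "Y1 = narayana_coeff (a - 1) b" and "Y2 = narayana_coeff a (b - 1)"
    and "Z1 = narayana_coeff (a - 2) b" and "Z2 = narayana_coeff (a - 1) (b - 1)"
    and "Z3 = narayana_coeff a (b - 2)"
  have idx: "a - 1 + b - 1 = a + b - 2" "a - 1 + b - 2 = a + b - 3"
      "a + (b - 1) - 1 = a + b - 2" "a + (b - 1) - 2 = a + b - 3" "a - 1 - 1 = a - 2" "b - 1 - 1 = b - 2"
    using False by auto
  have casts1: "of_nat (a - 1) = A - 1" "of_nat (b - 1) = B - 1"
    using False by (simp_all add: A_def B_def of_nat_diff)
  have "of_nat ((a - 1) * (a - 2)) = (A - 1) * (A - 2)" "of_nat ((b - 1) * (b - 2)) = (B - 1) * (B - 2)"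
    unfolding idx(5,6)[symmetric] of_nat_mult_pred casts1 by simp_all
  then have casts: "of_nat (a * (a - 1)) = A * (A - 1)" "of_nat (b * (b - 1)) = B * (B - 1)"
      "of_nat ((a - 1) * (a - 2)) = (A - 1) * (A - 2)" "of_nat ((b - 1) * (b - 2)) = (B - 1) * (B - 2)"
      "of_nat ((a + b - 1) * (a + b - 2)) = (D - 1) * (D - 2)"
      "of_nat ((a + b - 2) * (a + b - 3)) = (D - 2) * (D - 3)"
      "of_nat (2 * (a + b) - 3) = 2 * D - 3" "of_nat (a + b - 3) = D - 3"
    using assms False by (simp_all add: A_def B_def D_def of_nat_diff of_nat_mult_pred)
  have "A * (A - 1) * X = (D - 1) * (D - 2) * Y1"
    using narayana_coeff_lower_left[of a b, where 'a='a] by (simp only: casts X_def Y1_def)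
  moreover have "B * (B - 1) * X = (D - 1) * (D - 2) * Y2"
    using narayana_coeff_lower_right[of b a, where 'a='a] by (simp only: casts X_def Y2_def)
  moreover have "(A - 1) * (A - 2) * Y1 = (D - 2) * (D - 3) * Z1"
    using narayana_coeff_lower_left[of "a - 1" b, where 'a='a] by (simp only: casts idx Y1_def Z1_def)
  moreover have "B * (B - 1) * Y1 = (D - 2) * (D - 3) * Z2"
    using narayana_coeff_lower_right[of b "a - 1", where 'a='a] by (simp only: casts idx Y1_def Z2_def)
  moreover have "(B - 1) * (B - 2) * Y2 = (D - 2) * (D - 3) * Z3"
    using narayana_coeff_lower_right[of "b - 1" a, where 'a='a] by (simp only: casts idx Y2_def Z3_def)
  moreover have "D = A + B" by (simp add: A_def B_def D_def)
  \<comment> \<open>all five neighbours are rational multiples of X, so the recurrence is a polynomial identity\<close>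
  ultimately have "(D - 1) * (D - 2) ^ 2 * (D * X - ((2 * D - 3) * (Y1 + Y2) - (D - 3) * (Z1 - 2 * Z2 + Z3))) = 0"
    by algebra
  moreover have "(D - 1) * (D - 2) ^ 2 \<noteq> 0"
  proof -
    have "D \<noteq> of_nat 1" "D \<noteq> of_nat 2"
      unfolding D_def of_nat_eq_iff using assms by linarith+
    then show ?thesis by simp
  qed
  ultimately have "D * X = (2 * D - 3) * (Y1 + Y2) - (D - 3) * (Z1 - 2 * Z2 + Z3)"
    by simp
  then show ?thesis
    unfolding casts(7,8) D_def[symmetric] X_def Y1_def Y2_def Z1_def Z2_def Z3_def .
qed auto

definition homog_poly :: "(nat \<Rightarrow> nat \<Rightarrow> 'a::comm_semiring_1) \<Rightarrow> nat \<Rightarrow> 'a \<Rightarrow> 'a \<Rightarrow> 'a" where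
  "homog_poly c d u v = (\<Sum>b\<le>d. c (d - b) b * u ^ (d - b) * v ^ b)"

lemma homog_poly_mult_left:
  assumes "c 0 (Suc d) = 0"
  shows "u * homog_poly c d u v = homog_poly (\<lambda>a b. c (a - 1) b) (Suc d) u v"
  unfolding homog_poly_def sum.atMost_Suc
  by (simp add: assms sum_distrib_left Suc_diff_le algebra_simps)

lemma homog_poly_mult_right:
  assumes "c (Suc d) 0 = 0"
  shows "v * homog_poly c d u v = homog_poly (\<lambda>a b. c a (b - 1)) (Suc d) u v"
  unfolding homog_poly_def sum.atMost_Suc_shift
  by (simp add: assms sum_distrib_left algebra_simps)

lemma homog_poly_narayana_rec:
  fixes u v :: "'a::field_char_0"
  defines "H \<equiv> \<lambda>m. homog_poly narayana_coeff m u v"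
  shows "of_nat (d + 3) * H (d + 3)
    = of_nat (2 * d + 3) * (u + v) * H (d + 2) - of_nat d * (u - v) ^ 2 * H (d + 1)"
proof -
  have "of_nat (2 * d + 3) * (u + v) * H (d + 2) - of_nat d * (u - v) ^ 2 * H (d + 1)
      = of_nat (2 * d + 3) * (u * H (d + 2) + v * H (d + 2))
        - of_nat d * (u * (u * H (d + 1)) - 2 * (u * (v * H (d + 1))) + v * (v * H (d + 1)))"
    by (simp add: algebra_simps power2_eq_square)
  also have "\<dots> = homog_poly (\<lambda>a b. of_nat (2 * d + 3) * (narayana_coeff (a - 1) b + narayana_coeff a (b - 1))
        - of_nat d * (narayana_coeff (a - 2) b - 2 * narayana_coeff (a - 1) (b - 1) + narayana_coeff a (b - 2)))
        (d + 3) u v"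
    unfolding H_def
    by (simp add: homog_poly_mult_left homog_poly_mult_right numeral_3_eq_3 numeral_2_eq_2)
       (simp add: homog_poly_def algebra_simps sum.distrib sum_subtractf sum_distrib_left)
  also have "\<dots> = of_nat (d + 3) * H (d + 3)"
    unfolding H_def homog_poly_def sum_distrib_left
  proof (rule sum.cong)
    fix b assume "b \<in> {..d + 3}"
    then show "(of_nat (2 * d + 3) * (narayana_coeff (d + 3 - b - 1) b + narayana_coeff (d + 3 - b) (b - 1))
        - of_nat d * (narayana_coeff (d + 3 - b - 2) b - 2 * narayana_coeff (d + 3 - b - 1) (b - 1)
        + narayana_coeff (d + 3 - b) (b - 2))) * u ^ (d + 3 - b) * v ^ b
      = of_nat (d + 3) * (narayana_coeff (d + 3 - b) b * u ^ (d + 3 - b) * v ^ b)"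
      using narayana_coeff_rec[of "d + 3 - b" b, where 'a='a] by simp
  qed simp
  finally show ?thesis ..
qed

lemma homog_poly_narayana_explicit:
  "homog_poly narayana_coeff (n + 1) u v = (\<Sum>k=1..n. (1 / of_nat n)
      * of_nat ((n choose k) * (n choose (k - 1))) * u ^ (n + 1 - k) * (v ^ k :: 'a::field_char_0))"
proof -
  have "homog_poly narayana_coeff (n + 1) u v
      = (\<Sum>k\<in>{1..n}. narayana_coeff (n + 1 - k) k * u ^ (n + 1 - k) * v ^ k)"
    unfolding homog_poly_def
    by (rule sum.mono_neutral_right) (auto simp: not_le Suc_le_eq)
  also have "\<dots> = (\<Sum>k=1..n. (1 / of_nat n)
      * of_nat ((n choose k) * (n choose (k - 1))) * u ^ (n + 1 - k) * v ^ k)"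
  proof (rule sum.cong)
    fix k assume k: "k \<in> {1..n}"
    then have "k - 1 \<le> n" and "n - (k - 1) = n + 1 - k"
      by auto
    then have "n choose (k - 1) = n choose (n + 1 - k)"
      using binomial_symmetric[of "k - 1" n] by simp
    then have "narayana_coeff (n + 1 - k) k
        = (of_nat ((n choose k) * (n choose (k - 1))) / of_nat n :: 'a)"
      using k by (simp add: narayana_coeff_def mult.commute[of "n choose (k - 1)"])
    then show "narayana_coeff (n + 1 - k) k * u ^ (n + 1 - k) * v ^ k
        = 1 / of_nat n * of_nat ((n choose k) * (n choose (k - 1))) * u ^ (n + 1 - k) * v ^ k"
      by simp
  qed simp
  finally show ?thesis .
qed

lemma narayana_dvd:
  assumes "1 \<le> k"
  shows "n dvd (n choose k) * (n choose (k - 1))"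
proof (cases "k \<le> n")
  case True
  define P Q P' Q' where "P = n choose k" and "Q = n choose (k - 1)"
    and "P' = (n - 1) choose k" and "Q' = (n - 1) choose (k - 1)"
  have e1: "n * Q' = (n - k + 1) * Q"
    using binomial_absorb_comp[of n "k - 1"] assms True by (simp add: Q_def Q'_def Suc_diff_le)
  have e2: "n * P' = (n - k) * P"
    using binomial_absorb_comp[of n k] by (simp add: P_def P'_def)
  have "n * (P * Q') = P * ((n - k + 1) * Q)"
    by (simp only: mult.left_commute[of n] e1)
  also have "\<dots> = (n - k) * P * Q + P * Q"
    by (simp add: algebra_simps)
  also have "\<dots> = n * (P' * Q) + P * Q"
    by (simp only: e2 mult.assoc[symmetric])
  finally have "n * (P * Q') = n * (P' * Q) + P * Q" .
  then show ?thesis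
    unfolding P_def Q_def by (metis dvd_add_right_iff dvd_triv_left)
qed (simp add: binomial_eq_0)

lemma of_nat_narayana:
  assumes "1 \<le> k"
  shows "of_nat (narayana n k) = (of_nat ((n choose k) * (n choose (k - 1))) / of_nat n :: 'a::field_char_0)"
proof -
  obtain q where "(n choose k) * (n choose (k - 1)) = n * q"
    using narayana_dvd[OF assms] by blast
  then show ?thesis
    by (cases "n = 0") (simp_all add: narayana_def)
qed

lemma homog_poly_narayana_eq_narayana_poly:
  fixes u v :: "'a::field_char_0"
  assumes "u \<noteq> 0"
  shows "homog_poly narayana_coeff (n + 1) u v = u ^ (n + 1) * narayana_poly n (v / u)"
  unfolding homog_poly_narayana_explicit narayana_poly_def sum_distrib_left
proof (rule sum.cong)
  fix k assume k: "k \<in> {1..n}"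
  then have "u ^ (n + 1) = u ^ (n + 1 - k) * u ^ k"
    by (simp flip: power_add)
  then show "1 / of_nat n * of_nat ((n choose k) * (n choose (k - 1))) * u ^ (n + 1 - k) * v ^ k
      = u ^ (n + 1) * (of_nat (narayana n k) * (v / u) ^ k)"
    using k assms by (simp add: of_nat_narayana power_divide field_simps)
qed simp

definition narayana_series :: "'a::field_char_0 \<Rightarrow> 'a \<Rightarrow> 'a \<Rightarrow> 'a fps" where
  "narayana_series s u v = Abs_fps (\<lambda>m. s ^ (m - 1) * homog_poly narayana_coeff m u v)"

lemma narayana_series_explicit:
  "narayana_series s u v = Abs_fps (\<lambda>m. if m < 2 then 0 else
            s ^ (m - 1) * (\<Sum>k=1..m-1. (1 / of_nat (m - 1))
               * of_nat (((m - 1) choose k) * ((m - 1) choose (k - 1)))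
               * u ^ (m - k) * v ^ k))"
proof (rule fps_ext)
  fix m
  show "narayana_series s u v $ m = Abs_fps (\<lambda>m. if m < 2 then 0 else
            s ^ (m - 1) * (\<Sum>k=1..m-1. (1 / of_nat (m - 1))
               * of_nat (((m - 1) choose k) * ((m - 1) choose (k - 1)))
               * u ^ (m - k) * v ^ k)) $ m"
  proof (cases "m < 2")
    case True
    then consider "m = 0" | "m = 1" by linarith
    then show ?thesis by cases (simp_all add: narayana_series_def homog_poly_def)
  next
    case False
    then show ?thesis
      using homog_poly_narayana_explicit[of "m - 1" u v] by (simp add: narayana_series_def)
  qed
qed

lemma narayana_series_nth_narayana_poly:
  assumes "u \<noteq> 0"
  shows "narayana_series s u v $ (n + 1) = s ^ n * u ^ (n + 1) * narayana_poly n (v / u)"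
  using homog_poly_narayana_eq_narayana_poly[OF assms, of n v] by (simp add: narayana_series_def)

lemma narayana_series_coeff_rec:
  "of_nat (m + 3) * narayana_series s u v $ (m + 3)
     = of_nat (2 * m + 3) * (s * (u + v)) * narayana_series s u v $ (m + 2)
       - of_nat m * (s ^ 2 * (u - v) ^ 2) * narayana_series s u v $ (m + 1)"
  using arg_cong[OF homog_poly_narayana_rec[of m u v], of "\<lambda>x. s ^ (m + 2) * x"]
  by (simp add: narayana_series_def algebra_simps power2_eq_square)

lemma G01_eq_narayana_series:
  fixes s u v :: "'a::field_char_0"
  assumes "s \<noteq> 0" and "dessin_genus0 s u v F"
  shows "G01 F = narayana_series s u v"
proof (rule fps_eq_by_coeff_rec[where \<alpha> = "\<lambda>m. of_nat (2 * m + 3) * (s * (u + v))"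
                                    and \<beta> = "\<lambda>m. of_nat m * (s ^ 2 * (u - v) ^ 2)"])
  show "G01 F $ k = narayana_series s u v $ k" if "k < 3" for k
    using that dessin_genus0_one_point_rec[OF assms, of 0]
    by (auto simp: less_Suc_eq numeral_3_eq_3 G01_def pdiff_def narayana_series_def
        homog_poly_def narayana_coeff_def)
qed (simp_all only: quadratic_fps_coeff_rec[OF assms(1) G01_quadratic[OF assms] G01_nth_0]
      narayana_series_coeff_rec)

theorem mainTheorem1:
  fixes s u v :: "'a::field_char_0" and F0 :: "'a pseries"
  assumes "s \<noteq> 0"
    and "dessin_genus0 s u v F0"
  shows "G01 F0 = fps_const (s * u * v) * fps_X ^ 2
                  + fps_const (s * (u + v)) * fps_X * G01 F0
                  + fps_const s * (G01 F0) ^ 2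
       \<and> G01 F0 = fps_const (1 / (2 * s)) *
            (1 - fps_const (s * (u + v)) * fps_X
               - fps_radical (\<lambda>_ _. 1) 2
                   (1 - fps_const (2 * s * (u + v)) * fps_X
                      + fps_const (s ^ 2 * (u - v) ^ 2) * fps_X ^ 2))
       \<and> G01 F0 = Abs_fps (\<lambda>m. if m < 2 then 0 else
            s ^ (m - 1) * (\<Sum>k=1..m-1. (1 / of_nat (m - 1))
               * of_nat (((m - 1) choose k) * ((m - 1) choose (k - 1)))
               * u ^ (m - k) * v ^ k))
       \<and> (u \<noteq> 0 \<longrightarrow> (\<forall>n\<ge>1. fps_nth (G01 F0) (n + 1) = s ^ n * u ^ (n + 1) * narayana_poly n (v / u)))"
proof -
  note G = G01_eq_narayana_series[OF assms]
  note Q = G01_quadratic[OF assms]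
  show ?thesis
    using Q quadratic_fps_radical(2)[OF assms(1) Q G01_nth_0] narayana_series_explicit[of s u v]
      narayana_series_nth_narayana_poly[of u s v]
    unfolding G by blast
qed

end
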